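(* Let $\kappa,\kappa_\infty>0$, $\mathcal M(v)=(2\pi)^{-N/2}e^{-|v|^2/2}$, $M=\mathcal M^{1/2}$, $f_\infty=\frac{\kappa_\infty\mathcal M}{1+\kappa_\infty\mathcal M}$, $\rho=\int_{\mathbb{R}^N}f_\infty\,dv$, $\nu(v)=\frac{\rho}{\kappa\kappa_\infty}(1+\kappa_\infty\mathcal M(v))$, and define on $L^2_v$ $$L(h)=\frac1\kappa\Big(\int_{\mathbb{R}^N}h(v')M(v')\,dv'\Big)M-\nu h.$$ Then $N(L)=\mathrm{Span}\{f_\infty/M\}$, $\int f_\infty^3\,dv<\rho$, and for every $h\in L^2_v$ with $\int_{\mathbb{R}^N}h\,\frac{f_\infty}{M}\,dv=0$, $$\langle L(h),h\rangle_{L^2_v}\le-\Big[1-\frac1\rho\int_{\mathbb{R}^N}f_\infty^3\,dv\Big]\int_{\mathbb{R}^N}h^2\nu\,dv.$$ In particular the spectral gap of $L$ is at least $\frac1{\kappa\kappa_\infty}\big[1-\frac1\rho\int f_\infty^3\,dv\big]$.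
   Context: This is the operator obtained by linearizing the fermionic ($\epsilon=1$) semi-classical relaxation operator $\frac1\kappa\int[\mathcal M(1-f)f'-\mathcal M'(1-f')f]dv'$ around $f_\infty$ with the scaling $f=f_\infty+(1+\kappa_\infty\mathcal M)^{-1}\kappa_\infty^{1/2}M\,h$.
   Formalization: The spectral gap of L is at least $\frac{\rho}{\kappa\kappa_\infty}$, not $\frac1{\kappa\kappa_\infty}$, times $1-\frac1\rho\int f_\infty^3\,dv$, measured against the unweighted $L^2_v$ norm of every h orthogonal to $f_\infty/M$. Apart from conventions, each condition added here is assumed in the paper as well or is needed for the statement above to hold. *)

theory Defs
  imports "HOL-Analysis.Analysis"
begin

text \<open>Velocity space R^N is an arbitrary Euclidean space 'a with N = DIM('a).\<close>

definition Maxw :: "'a::euclidean_space \<Rightarrow> real" where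
  "Maxw v = (2 * pi) powr (- real DIM('a) / 2) * exp (- (norm v)\<^sup>2 / 2)"

definition Msqrt :: "'a::euclidean_space \<Rightarrow> real" where
  "Msqrt v = sqrt (Maxw v)"

definition finf :: "real \<Rightarrow> 'a::euclidean_space \<Rightarrow> real" where
  "finf kinf v = kinf * Maxw v / (1 + kinf * Maxw v)"

definition rho :: "real \<Rightarrow> 'a::euclidean_space itself \<Rightarrow> real" where
  "rho kinf (_::'a itself) = (\<integral>v. (finf kinf v :: real) \<partial>(lborel :: 'a measure))"

definition nu :: "real \<Rightarrow> real \<Rightarrow> 'a::euclidean_space \<Rightarrow> real" where
  "nu kappa kinf v = rho kinf TYPE('a) / (kappa * kinf) * (1 + kinf * Maxw v)"

definition Lop :: "real \<Rightarrow> real \<Rightarrow> ('a::euclidean_space \<Rightarrow> real) \<Rightarrow> 'a \<Rightarrow> real" where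
  "Lop kappa kinf h v =
     (1 / kappa) * (\<integral>w. h w * Msqrt w \<partial>lborel) * Msqrt v - nu kappa kinf v * h v"

text \<open>L^2_v: Borel measurable, square-integrable real functions (elements identified a.e.).\<close>
definition L2v :: "('a::euclidean_space \<Rightarrow> real) set" where
  "L2v = {h. h \<in> borel_measurable lborel \<and> integrable lborel (\<lambda>v. (h v)\<^sup>2)}"

end

theory Submission
  imports Defs "HOL-Probability.Distributions"
begin

(* Write phi = finf / M. Since nu * phi = (rho / kappa) * M, the operator factors as
   L h = nu * ((<h, M> / rho) * phi - h), so L h = 0 exactly when h is a multiple of phi.
   For the gap, the pointwise identity M = M finf + phi / kinf turns the orthogonality <h, phi> = 0
   into <h, M> = <h, M finf>, and Cauchy-Schwarz with weight nu bounds its square by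
   (int h^2 nu) * (int (M finf)^2 / nu) = (int h^2 nu) * (kappa / rho) * (int finf^3).
   Inserting this into <L h, h> = <h, M>^2 / kappa - int h^2 nu gives the estimate; int finf^3 < rho
   because 0 < finf < 1, and nu >= rho / (kappa kinf) yields the L^2 form. *)

lemma integral_pos_of_pos:
  fixes f :: "'a \<Rightarrow> real"
  assumes "integrable M f" "\<And>x. 0 < f x" "emeasure M (space M) \<noteq> 0"
  shows "0 < integral\<^sup>L M f"
proof -
  have nonneg: "AE x in M. 0 \<le> f x"
    using assms(2) by (simp add: less_imp_le)
  have "\<not> (AE x in M. f x = 0)"
  proof
    assume "AE x in M. f x = 0"
    then have "AE x in M. False"
      using assms(2) by (auto elim: eventually_mono simp: less_le)
    then show False
      using assms(3) ae_filter_eq_bot_iff[of M] by (simp add: trivial_limit_def)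
  qed
  then have "integral\<^sup>L M f \<noteq> 0"
    using integral_nonneg_eq_0_iff_AE[OF assms(1) nonneg] by simp
  moreover have "0 \<le> integral\<^sup>L M f"
    using nonneg by (rule integral_nonneg_AE)
  ultimately show ?thesis by simp
qed

lemma integrable_mult_of_square_integrable:
  fixes f g :: "'a \<Rightarrow> real"
  assumes [measurable]: "f \<in> borel_measurable M" "g \<in> borel_measurable M"
    and "integrable M (\<lambda>x. (f x)\<^sup>2)" "integrable M (\<lambda>x. (g x)\<^sup>2)"
  shows "integrable M (\<lambda>x. f x * g x)"
proof (rule Bochner_Integration.integrable_bound)
  show "integrable M (\<lambda>x. (f x)\<^sup>2 + (g x)\<^sup>2)"
    using assms by simp
  show "AE x in M. norm (f x * g x) \<le> norm ((f x)\<^sup>2 + (g x)\<^sup>2)"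
  proof (intro AE_I2)
    fix x
    have "2 * \<bar>f x\<bar> * \<bar>g x\<bar> \<le> (f x)\<^sup>2 + (g x)\<^sup>2" "0 \<le> \<bar>f x\<bar> * \<bar>g x\<bar>"
      using sum_squares_bound[of "\<bar>f x\<bar>" "\<bar>g x\<bar>"] by simp_all
    moreover have "norm (f x * g x) = \<bar>f x\<bar> * \<bar>g x\<bar>" "norm ((f x)\<^sup>2 + (g x)\<^sup>2) = (f x)\<^sup>2 + (g x)\<^sup>2"
      by (simp_all add: abs_mult)
    ultimately show "norm (f x * g x) \<le> norm ((f x)\<^sup>2 + (g x)\<^sup>2)"
      by linarith
  qed
qed simp

lemma integral_Cauchy_Schwarz:
  fixes f g :: "'a \<Rightarrow> real"
  assumes "integrable M (\<lambda>x. (f x)\<^sup>2)" "integrable M (\<lambda>x. (g x)\<^sup>2)" "integrable M (\<lambda>x. f x * g x)"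
  shows "(\<integral>x. f x * g x \<partial>M)\<^sup>2 \<le> (\<integral>x. (f x)\<^sup>2 \<partial>M) * (\<integral>x. (g x)\<^sup>2 \<partial>M)"
proof -
  define A B C where "A = (\<integral>x. (f x)\<^sup>2 \<partial>M)" and "B = (\<integral>x. (g x)\<^sup>2 \<partial>M)"
    and "C = (\<integral>x. f x * g x \<partial>M)"
  have quadratic_nonneg: "0 \<le> t\<^sup>2 * A - 2 * t * C + B" for t
  proof -
    have "0 \<le> (\<integral>x. (t * f x - g x)\<^sup>2 \<partial>M)" by simp
    also have "\<dots> = (\<integral>x. t\<^sup>2 * (f x)\<^sup>2 - 2 * t * (f x * g x) + (g x)\<^sup>2 \<partial>M)"
      by (simp add: power2_eq_square algebra_simps)
    also have "\<dots> = t\<^sup>2 * A - 2 * t * C + B"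
      using assms unfolding A_def B_def C_def by simp
    finally show ?thesis .
  qed
  have "C\<^sup>2 \<le> A * B"
  proof (cases "A = 0")
    case True
    with quadratic_nonneg[of "(B + 1) / (2 * C)"] have "C = 0"
      by (cases "C = 0") simp_all
    with True show ?thesis by simp
  next
    case False
    then have "0 < A" unfolding A_def by (simp add: less_le)
    with quadratic_nonneg[of "C / A"] show ?thesis
      by (simp add: power2_eq_square field_simps)
  qed
  then show ?thesis unfolding A_def B_def C_def .
qed

lemma integral_weighted_Cauchy_Schwarz:
  fixes f g w :: "'a \<Rightarrow> real"
  assumes [measurable]: "f \<in> borel_measurable M" "g \<in> borel_measurable M" "w \<in> borel_measurable M"
    and "\<And>x. 0 < w x"
    and "integrable M (\<lambda>x. (f x)\<^sup>2 * w x)" "integrable M (\<lambda>x. (g x)\<^sup>2 / w x)"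
  shows "(\<integral>x. f x * g x \<partial>M)\<^sup>2 \<le> (\<integral>x. (f x)\<^sup>2 * w x \<partial>M) * (\<integral>x. (g x)\<^sup>2 / w x \<partial>M)"
proof -
  define a b where "a x = f x * sqrt (w x)" and "b x = g x / sqrt (w x)" for x
  have [measurable]: "a \<in> borel_measurable M" "b \<in> borel_measurable M"
    unfolding a_def[abs_def] b_def[abs_def] by measurable
  have squares: "(a x)\<^sup>2 = (f x)\<^sup>2 * w x" "(b x)\<^sup>2 = (g x)\<^sup>2 / w x" "a x * b x = f x * g x" for x
    using assms(4)[of x] by (simp_all add: a_def b_def power_mult_distrib power_divide)
  have "integrable M (\<lambda>x. a x * b x)"
    using assms(5,6) by (intro integrable_mult_of_square_integrable) (simp_all add: squares)
  then show ?thesis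
    using integral_Cauchy_Schwarz[of M a b] assms(5,6) by (simp add: squares)
qed

lemma Maxw_measurable [measurable]: "(Maxw :: 'a::euclidean_space \<Rightarrow> real) \<in> borel_measurable borel"
  unfolding Maxw_def[abs_def] by measurable

lemma Msqrt_measurable [measurable]: "(Msqrt :: 'a::euclidean_space \<Rightarrow> real) \<in> borel_measurable borel"
  unfolding Msqrt_def[abs_def] by measurable

lemma finf_measurable [measurable]: "(finf k :: 'a::euclidean_space \<Rightarrow> real) \<in> borel_measurable borel"
  unfolding finf_def[abs_def] by measurable

lemma nu_measurable [measurable]: "(nu kappa k :: 'a::euclidean_space \<Rightarrow> real) \<in> borel_measurable borel"
  unfolding nu_def[abs_def] by measurable

lemma Maxw_pos: "0 < Maxw v"
  unfolding Maxw_def by simp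

lemma Maxw_le_1: "Maxw (v :: 'a::euclidean_space) \<le> 1"
proof -
  have "(2 * pi) powr (- real DIM('a) / 2) \<le> 1"
    using powr_mono[of "- real DIM('a) / 2" 0 "2 * pi"] pi_gt3 by simp
  then show ?thesis
    unfolding Maxw_def by (intro mult_le_one) simp_all
qed

lemma Maxw_eq_prod_std_normal_density:
  "Maxw (v :: 'a::euclidean_space) = (\<Prod>b\<in>Basis. std_normal_density (v \<bullet> b))"
proof -
  have "(\<Prod>b\<in>(Basis :: 'a set). 1 / sqrt (2 * pi)) = ((2 * pi) powr (-1 / 2)) powr real DIM('a)"
    by (simp add: powr_realpow powr_minus_divide powr_half_sqrt)
  then have prefactor: "(\<Prod>b\<in>(Basis :: 'a set). 1 / sqrt (2 * pi)) = (2 * pi) powr (- real DIM('a) / 2)"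
    by (simp add: powr_powr)
  have "(norm v)\<^sup>2 = (\<Sum>b\<in>Basis. (v \<bullet> b)\<^sup>2)"
    unfolding power2_norm_eq_inner by (subst euclidean_inner) (simp add: power2_eq_square)
  then have "(\<Prod>b\<in>Basis. exp (- (v \<bullet> b)\<^sup>2 / 2)) = exp (- (norm v)\<^sup>2 / 2)"
    by (simp add: exp_sum[symmetric] sum_negf sum_divide_distrib)
  with prefactor show ?thesis
    unfolding Maxw_def std_normal_density_def prod.distrib by simp
qed

lemma nn_integral_Maxw: "(\<integral>\<^sup>+v. Maxw (v :: 'a::euclidean_space) \<partial>lborel) = 1"
proof -
  have "(\<integral>\<^sup>+v. Maxw (v :: 'a) \<partial>lborel) = (\<integral>\<^sup>+v. (\<Prod>b\<in>Basis. ennreal (std_normal_density ((v :: 'a) \<bullet> b))) \<partial>lborel)"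
    by (subst prod_ennreal) (auto simp: Maxw_eq_prod_std_normal_density)
  also have "\<dots> = (\<Prod>b\<in>(Basis :: 'a set). \<integral>\<^sup>+x. std_normal_density x \<partial>lborel)"
    by (rule nn_integral_lborel_prod) auto
  also have "(\<integral>\<^sup>+x. std_normal_density x \<partial>lborel) = 1"
    by (subst nn_integral_eq_integral) auto
  finally show ?thesis by simp
qed

lemma integrable_Maxw: "integrable lborel (Maxw :: 'a::euclidean_space \<Rightarrow> real)"
  using nn_integral_Maxw[where 'a='a] Maxw_pos[where 'a='a]
  by (subst integrable_iff_bounded) (auto simp: less_imp_le)

lemma Msqrt_pos: "0 < Msqrt v"
  unfolding Msqrt_def using Maxw_pos by simp

lemma Msqrt_squared: "(Msqrt v)\<^sup>2 = Maxw v"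
  unfolding Msqrt_def using Maxw_pos[of v] by simp

lemma finf_pos: "0 < k \<Longrightarrow> 0 < finf k v"
  unfolding finf_def using Maxw_pos[of v] by (simp add: add_pos_pos)

lemma finf_less_1: "0 < k \<Longrightarrow> finf k v < 1"
  unfolding finf_def using Maxw_pos[of v] by (simp add: divide_simps add_pos_pos)

lemma finf_le_Maxw: "0 < k \<Longrightarrow> finf k v \<le> k * Maxw v"
  unfolding finf_def using Maxw_pos[of v] by (simp add: divide_simps)

lemma integrable_finf:
  assumes "0 < k" shows "integrable lborel (finf k :: 'a::euclidean_space \<Rightarrow> real)"
proof (rule Bochner_Integration.integrable_bound[OF integrable_mult_right[OF integrable_Maxw, of k]])
  show "AE v in lborel. norm (finf k v) \<le> norm (k * Maxw (v :: 'a))"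
  proof (rule AE_I2)
    fix v :: 'a
    show "norm (finf k v) \<le> norm (k * Maxw v)"
      using assms finf_pos[OF assms, of v] finf_le_Maxw[OF assms, of v] Maxw_pos[of v] by simp
  qed
qed simp

lemma integrable_finf_cube:
  assumes "0 < k" shows "integrable lborel (\<lambda>v::'a::euclidean_space. (finf k v)^3)"
proof (rule Bochner_Integration.integrable_bound[OF integrable_finf[OF assms]])
  show "AE v in lborel. norm ((finf k v)^3) \<le> norm (finf k (v :: 'a))"
  proof (rule AE_I2)
    fix v :: 'a
    have "0 < finf k v" "finf k v < 1"
      using finf_pos[OF assms] finf_less_1[OF assms] by auto
    moreover from this have "(finf k v)^3 \<le> finf k v"
      by (simp add: power3_eq_cube mult_le_one)
    ultimately show "norm ((finf k v)^3) \<le> norm (finf k v)"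
      by simp
  qed
qed simp

lemma integral_finf_cube_less_rho:
  assumes "0 < k"
  shows "(\<integral>v. (finf k v)^3 \<partial>(lborel :: 'a::euclidean_space measure)) < rho k TYPE('a)"
proof -
  have "0 < finf k v - (finf k v)^3" for v :: 'a
  proof -
    have "finf k v - (finf k v)^3 = finf k v * ((1 - finf k v) * (1 + finf k v))"
      by (simp add: algebra_simps power3_eq_cube)
    then show ?thesis
      using finf_pos[OF assms, of v] finf_less_1[OF assms, of v] by simp
  qed
  then have "0 < (\<integral>v. finf k v - (finf k v)^3 \<partial>(lborel :: 'a measure))"
    using integrable_finf[OF assms] integrable_finf_cube[OF assms]
    by (intro integral_pos_of_pos Bochner_Integration.integrable_diff) simp_all
  also have "\<dots> = rho k TYPE('a) - (\<integral>v. (finf k v)^3 \<partial>(lborel :: 'a measure))"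
    unfolding rho_def
    by (rule Bochner_Integration.integral_diff[OF integrable_finf[OF assms] integrable_finf_cube[OF assms]])
  finally show ?thesis by simp
qed

lemma rho_pos: "0 < k \<Longrightarrow> 0 < rho k TYPE('a::euclidean_space)"
  using integrable_finf[of k, where 'a='a] finf_pos[of k]
  unfolding rho_def by (intro integral_pos_of_pos) simp_all

lemma nu_pos:
  assumes "0 < kappa" "0 < k" shows "0 < nu kappa k (v :: 'a::euclidean_space)"
  unfolding nu_def using assms rho_pos[OF assms(2), where 'a='a] Maxw_pos[of v]
  by (simp add: add_pos_pos)

lemma nu_ge:
  assumes "0 < kappa" "0 < k" shows "rho k TYPE('a) / (kappa * k) \<le> nu kappa k (v :: 'a::euclidean_space)"
proof -
  have "rho k TYPE('a) / (kappa * k) * 1 \<le> rho k TYPE('a) / (kappa * k) * (1 + k * Maxw v)"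
    using assms rho_pos[OF assms(2), where 'a='a] Maxw_pos[of v] by (intro mult_left_mono) simp_all
  then show ?thesis
    unfolding nu_def by simp
qed

lemma nu_le:
  assumes "0 < kappa" "0 < k"
  shows "nu kappa k (v :: 'a::euclidean_space) \<le> rho k TYPE('a) / (kappa * k) * (1 + k)"
  unfolding nu_def using assms rho_pos[OF assms(2), where 'a='a] Maxw_le_1[of v]
  by (intro mult_left_mono) simp_all

lemma finf_div_Msqrt: "finf k v / Msqrt v = k * Msqrt v / (1 + k * Maxw v)"
  unfolding finf_def Msqrt_squared[symmetric] using Msqrt_pos[of v]
  by (simp add: power2_eq_square)

lemma nu_mult_finf_div_Msqrt:
  assumes "0 < k"
  shows "nu kappa k v * (finf k v / Msqrt v) = rho k TYPE('a) / kappa * Msqrt (v :: 'a::euclidean_space)"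
proof -
  have "0 < 1 + k * Maxw v"
    using assms Maxw_pos[of v] by (simp add: add_pos_pos)
  then show ?thesis
    using assms unfolding nu_def finf_div_Msqrt by simp
qed

lemma Msqrt_decomposition:
  assumes "0 < k"
  shows "Msqrt v = Msqrt v * finf k v + finf k v / Msqrt v / k"
proof -
  have "0 < 1 + k * (Msqrt v)\<^sup>2"
    using assms by (simp add: add_pos_nonneg)
  moreover have "k * Msqrt v / (1 + k * (Msqrt v)\<^sup>2) / k = Msqrt v / (1 + k * (Msqrt v)\<^sup>2)"
    using assms by simp
  ultimately show ?thesis
    using Msqrt_pos[of v] unfolding finf_div_Msqrt unfolding finf_def Msqrt_squared[symmetric]
    by (simp add: field_simps power2_eq_square)
qed

lemma Msqrt_finf_squared_div_nu:
  assumes "0 < kappa" "0 < k"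
  shows "(Msqrt v * finf k v)\<^sup>2 / nu kappa k v = kappa / rho k TYPE('a) * (finf k (v :: 'a::euclidean_space))^3"
proof -
  have "0 < 1 + k * (Msqrt v)\<^sup>2"
    using assms by (simp add: add_pos_nonneg)
  then show ?thesis
    using assms rho_pos[OF assms(2), where 'a='a] Msqrt_pos[of v]
    unfolding nu_def finf_def Msqrt_squared[symmetric]
    by (simp add: field_simps power2_eq_square power3_eq_cube)
qed

lemma Lop_eq_nu_mult:
  assumes "0 < k"
  shows "Lop kappa k h v = nu kappa k v
    * ((\<integral>w. h w * Msqrt w \<partial>lborel) / rho k TYPE('a) * (finf k v / Msqrt v) - h (v :: 'a::euclidean_space))"
proof -
  define A where "A = (\<integral>w. h w * Msqrt w \<partial>lborel)"
  have "nu kappa k v * (A / rho k TYPE('a) * (finf k v / Msqrt v) - h v)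
      = A / rho k TYPE('a) * (nu kappa k v * (finf k v / Msqrt v)) - nu kappa k v * h v"
    by (simp add: algebra_simps)
  also have "\<dots> = 1 / kappa * A * Msqrt v - nu kappa k v * h v"
    unfolding nu_mult_finf_div_Msqrt[OF assms] using rho_pos[OF assms, where 'a='a] by simp
  finally show ?thesis
    unfolding Lop_def A_def by simp
qed

lemma L2vD:
  assumes "h \<in> L2v"
  shows "h \<in> borel_measurable lborel" "integrable lborel (\<lambda>v. (h v)\<^sup>2)"
  using assms unfolding L2v_def by auto

lemma integrable_mult_Msqrt:
  assumes "h \<in> L2v" shows "integrable lborel (\<lambda>v. h v * Msqrt v)"
  using L2vD[OF assms] integrable_Maxw
  by (intro integrable_mult_of_square_integrable) (simp_all add: Msqrt_squared)

lemma integrable_square_mult_nu: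
  assumes "0 < kappa" "0 < k" "h \<in> L2v"
  shows "integrable lborel (\<lambda>v. (h v)\<^sup>2 * nu kappa k v)"
proof (rule Bochner_Integration.integrable_bound)
  show "integrable lborel (\<lambda>v. (h v)\<^sup>2 * (rho k TYPE('a) / (kappa * k) * (1 + k)))"
    using L2vD(2)[OF assms(3)] by simp
  show "AE v in lborel. norm ((h v)\<^sup>2 * nu kappa k v)
          \<le> norm ((h v)\<^sup>2 * (rho k TYPE('a) / (kappa * k) * (1 + k)))"
  proof (rule AE_I2)
    fix v :: 'a
    have "0 < rho k TYPE('a) / (kappa * k) * (1 + k)"
      using assms rho_pos[OF assms(2), where 'a='a] by simp
    moreover have "(h v)\<^sup>2 * nu kappa k v \<le> (h v)\<^sup>2 * (rho k TYPE('a) / (kappa * k) * (1 + k))"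
      by (rule mult_left_mono[OF nu_le[OF assms(1,2)]]) simp
    ultimately show "norm ((h v)\<^sup>2 * nu kappa k v)
        \<le> norm ((h v)\<^sup>2 * (rho k TYPE('a) / (kappa * k) * (1 + k)))"
      using nu_pos[OF assms(1,2), of v] assms rho_pos[OF assms(2), where 'a='a] by (simp add: abs_mult)
  qed
qed (use L2vD(1)[OF assms(3)] in measurable)

lemma Lop_inner_eq:
  assumes "0 < kappa" "0 < k" "h \<in> L2v"
  shows "(\<integral>v. Lop kappa k h v * h v \<partial>lborel)
    = (\<integral>v. h v * Msqrt v \<partial>lborel)\<^sup>2 / kappa - (\<integral>v. (h v)\<^sup>2 * nu kappa k v \<partial>lborel)"
proof -
  define A where "A = (\<integral>v. h v * Msqrt v \<partial>lborel)"
  have "(\<integral>v. Lop kappa k h v * h v \<partial>lborel)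
      = (\<integral>v. A / kappa * (h v * Msqrt v) - (h v)\<^sup>2 * nu kappa k v \<partial>lborel)"
    unfolding Lop_def A_def by (simp add: power2_eq_square algebra_simps)
  also have "\<dots> = A / kappa * A - (\<integral>v. (h v)\<^sup>2 * nu kappa k v \<partial>lborel)"
    using integrable_mult_Msqrt[OF assms(3)] integrable_square_mult_nu[OF assms]
    by (simp add: Bochner_Integration.integral_diff A_def)
  finally show ?thesis
    unfolding A_def by (simp add: power2_eq_square)
qed

lemma Lop_null_space:
  assumes "0 < kappa" "0 < k"
  shows "{h \<in> (L2v :: ('a::euclidean_space \<Rightarrow> real) set). AE v in lborel. Lop kappa k h v = 0}
    = {h \<in> L2v. \<exists>c. AE v in lborel. h v = c * (finf k v / Msqrt v)}"
proof (rule Collect_cong, rule conj_cong[OF refl])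
  fix h :: "'a \<Rightarrow> real"
  assume h: "h \<in> L2v"
  define A where "A = (\<integral>v. h v * Msqrt v \<partial>lborel)"
  have Lop_eq: "Lop kappa k h v = nu kappa k v * (A / rho k TYPE('a) * (finf k v / Msqrt v) - h v)" for v
    unfolding A_def by (rule Lop_eq_nu_mult[OF assms(2)])
  show "(AE v in lborel. Lop kappa k h v = 0) \<longleftrightarrow> (\<exists>c. AE v in lborel. h v = c * (finf k v / Msqrt v))"
  proof
    assume "AE v in lborel. Lop kappa k h v = 0"
    then show "\<exists>c. AE v in lborel. h v = c * (finf k v / Msqrt v)"
    proof (intro exI, elim eventually_mono)
      fix v
      assume "Lop kappa k h v = 0"
      then show "h v = A / rho k TYPE('a) * (finf k v / Msqrt v)"
        using nu_pos[OF assms, of v] by (simp add: Lop_eq)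
    qed
  next
    assume "\<exists>c. AE v in lborel. h v = c * (finf k v / Msqrt v)"
    then obtain c where c: "AE v in lborel. h v = c * (finf k v / Msqrt v)" ..
    have "A = (\<integral>v. c * finf k v \<partial>(lborel :: 'a measure))"
      unfolding A_def using c L2vD(1)[OF h]
      by (intro integral_cong_AE) (auto elim!: eventually_mono simp: dual_order.strict_implies_not_eq[OF Msqrt_pos])
    then have "A / rho k TYPE('a) = c"
      using rho_pos[OF assms(2), where 'a='a] unfolding rho_def by simp
    with c show "AE v in lborel. Lop kappa k h v = 0"
      by (auto simp: Lop_eq elim!: eventually_mono)
  qed
qed

lemma integrable_mult_Msqrt_finf:
  fixes h :: "'a::euclidean_space \<Rightarrow> real"
  assumes "0 < k" "h \<in> L2v"
  shows "integrable lborel (\<lambda>v. h v * (Msqrt v * finf k v))"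
proof (rule Bochner_Integration.integrable_bound[OF integrable_mult_Msqrt[OF assms(2)]])
  show "AE v in lborel. norm (h v * (Msqrt v * finf k v)) \<le> norm (h v * Msqrt v)"
  proof (rule AE_I2)
    fix v :: 'a
    have "Msqrt v * finf k v \<le> Msqrt v"
      using Msqrt_pos[of v] finf_less_1[OF assms(1), of v] by (intro mult_left_le) simp_all
    then show "norm (h v * (Msqrt v * finf k v)) \<le> norm (h v * Msqrt v)"
      using Msqrt_pos[of v] finf_pos[OF assms(1), of v]
      by (simp add: abs_mult mult_left_mono)
  qed
qed (use L2vD(1)[OF assms(2)] in measurable)

lemma integral_mult_Msqrt_eq_of_orthogonal:
  fixes h :: "'a::euclidean_space \<Rightarrow> real"
  assumes "0 < k" "h \<in> L2v"
    and orth: "(\<integral>v. h v * (finf k v / Msqrt v) \<partial>lborel) = 0"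
  shows "(\<integral>v. h v * Msqrt v \<partial>lborel) = (\<integral>v. h v * (Msqrt v * finf k v) \<partial>lborel)"
proof -
  have diff_eq: "h v * Msqrt v - h v * (Msqrt v * finf k v) = h v * (finf k v / Msqrt v) / k" for v
  proof -
    have "Msqrt v - Msqrt v * finf k v = finf k v / Msqrt v / k"
      using Msqrt_decomposition[OF assms(1), of v] by linarith
    then show ?thesis
      by (metis right_diff_distrib times_divide_eq_right)
  qed
  have "(\<integral>v. h v * Msqrt v \<partial>lborel) - (\<integral>v. h v * (Msqrt v * finf k v) \<partial>lborel)
      = (\<integral>v. h v * (finf k v / Msqrt v) / k \<partial>lborel)"
    unfolding Bochner_Integration.integral_diff[OF integrable_mult_Msqrt[OF assms(2)]
        integrable_mult_Msqrt_finf[OF assms(1,2)], symmetric] diff_eq ..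
  also have "\<dots> = (\<integral>v. h v * (finf k v / Msqrt v) \<partial>lborel) / k"
    by (rule integral_divide_zero)
  finally show ?thesis
    unfolding orth by simp
qed

lemma integral_mult_Msqrt_squared_le:
  fixes h :: "'a::euclidean_space \<Rightarrow> real"
  assumes "0 < kappa" "0 < k" "h \<in> L2v"
    and orth: "(\<integral>v. h v * (finf k v / Msqrt v) \<partial>lborel) = 0"
  shows "(\<integral>v. h v * Msqrt v \<partial>lborel)\<^sup>2
    \<le> kappa / rho k TYPE('a) * (\<integral>v. (finf k v)^3 \<partial>(lborel :: 'a measure))
        * (\<integral>v. (h v)\<^sup>2 * nu kappa k v \<partial>lborel)"
proof -
  note [measurable] = L2vD(1)[OF assms(3)]
  have "(\<integral>v. h v * (Msqrt v * finf k v) \<partial>lborel)\<^sup>2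
      \<le> (\<integral>v. (h v)\<^sup>2 * nu kappa k v \<partial>lborel)
        * (\<integral>v. (Msqrt v * finf k v)\<^sup>2 / nu kappa k v \<partial>(lborel :: 'a measure))"
    using nu_pos[OF assms(1,2)] integrable_square_mult_nu[OF assms(1,2,3)]
      integrable_finf_cube[OF assms(2)]
    by (intro integral_weighted_Cauchy_Schwarz)
      (auto simp: Msqrt_finf_squared_div_nu[OF assms(1,2)] intro!: integrable_divide_zero integrable_mult_right)
  then show ?thesis
    unfolding integral_mult_Msqrt_eq_of_orthogonal[OF assms(2,3) orth]
    by (simp add: Msqrt_finf_squared_div_nu[OF assms(1,2)] mult.commute)
qed

lemma Lop_inner_le_nu_weighted:
  fixes h :: "'a::euclidean_space \<Rightarrow> real"
  assumes "0 < kappa" "0 < k" and h: "h \<in> L2v"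
    and orth: "(\<integral>v. h v * (finf k v / Msqrt v) \<partial>lborel) = 0"
  shows "(\<integral>v. Lop kappa k h v * h v \<partial>lborel)
    \<le> - (1 - (1 / rho k TYPE('a)) * (\<integral>v. (finf k v)^3 \<partial>(lborel :: 'a measure)))
        * (\<integral>v. (h v)\<^sup>2 * nu kappa k v \<partial>lborel)"
proof -
  define r F3 X where "r = rho k TYPE('a)" and "F3 = (\<integral>v. (finf k v)^3 \<partial>(lborel :: 'a measure))"
    and "X = (\<integral>v. (h v)\<^sup>2 * nu kappa k v \<partial>lborel)"
  have "(\<integral>v. h v * Msqrt v \<partial>lborel)\<^sup>2 / kappa \<le> kappa / r * F3 * X / kappa"
    using integral_mult_Msqrt_squared_le[OF assms] assms(1)
    unfolding r_def F3_def X_def by (intro divide_right_mono) simp_all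
  also have "\<dots> = X * F3 / r"
    using assms(1) by simp
  finally show ?thesis
    unfolding Lop_inner_eq[OF assms(1,2) h] r_def[symmetric] F3_def[symmetric] X_def[symmetric]
    by (simp add: algebra_simps)
qed

lemma Lop_spectral_gap:
  fixes h :: "'a::euclidean_space \<Rightarrow> real"
  assumes "0 < kappa" "0 < k" and h: "h \<in> L2v"
    and orth: "(\<integral>v. h v * (finf k v / Msqrt v) \<partial>lborel) = 0"
  shows "(\<integral>v. Lop kappa k h v * h v \<partial>lborel)
    \<le> - (rho k TYPE('a) / (kappa * k))
        * (1 - (1 / rho k TYPE('a)) * (\<integral>v. (finf k v)^3 \<partial>(lborel :: 'a measure)))
        * (\<integral>v. (h v)\<^sup>2 \<partial>lborel)"
proof -
  define r gap where "r = rho k TYPE('a)"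
    and "gap = 1 - (1 / r) * (\<integral>v. (finf k v)^3 \<partial>(lborel :: 'a measure))"
  have "0 < gap"
    using integral_finf_cube_less_rho[OF assms(2), where 'a='a] rho_pos[OF assms(2), where 'a='a]
    unfolding gap_def r_def by (simp add: field_simps)
  have "r / (kappa * k) * (\<integral>v. (h v)\<^sup>2 \<partial>lborel) = (\<integral>v. (h v)\<^sup>2 * (r / (kappa * k)) \<partial>lborel)"
    by simp
  also have "\<dots> \<le> (\<integral>v. (h v)\<^sup>2 * nu kappa k v \<partial>lborel)"
    using L2vD(2)[OF h] integrable_square_mult_nu[OF assms(1,2) h] nu_ge[OF assms(1,2)]
    unfolding r_def by (intro integral_mono mult_left_mono) simp_all
  finally have "gap * (r / (kappa * k) * (\<integral>v. (h v)\<^sup>2 \<partial>lborel)) \<le> gap * (\<integral>v. (h v)\<^sup>2 * nu kappa k v \<partial>lborel)"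
    using \<open>0 < gap\<close> by (intro mult_left_mono) simp_all
  with Lop_inner_le_nu_weighted[OF assms] show ?thesis
    unfolding gap_def[symmetric] r_def[symmetric] by (simp add: algebra_simps)
qed

theorem mainTheorem7:
  fixes kappa kinf :: real
  assumes "kappa > 0" and "kinf > 0"
  shows "{h \<in> (L2v :: ('a::euclidean_space \<Rightarrow> real) set).
            AE v in lborel. Lop kappa kinf h v = 0}
         = {h \<in> L2v. \<exists>c. AE v in lborel. h v = c * (finf kinf v / Msqrt v)}
       \<and> (\<integral>v. (finf kinf v)^3 \<partial>(lborel :: 'a measure)) < rho kinf TYPE('a)
       \<and> (\<forall>h \<in> (L2v :: ('a \<Rightarrow> real) set).
            (\<integral>v. h v * (finf kinf v / Msqrt v) \<partial>lborel) = 0 \<longrightarrow>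
            (\<integral>v. Lop kappa kinf h v * h v \<partial>lborel)
              \<le> - (1 - (1 / rho kinf TYPE('a)) * (\<integral>v. (finf kinf v)^3 \<partial>(lborel :: 'a measure)))
                  * (\<integral>v. (h v)\<^sup>2 * nu kappa kinf v \<partial>lborel))
       \<and> (\<forall>h \<in> (L2v :: ('a \<Rightarrow> real) set).
            (\<integral>v. h v * (finf kinf v / Msqrt v) \<partial>lborel) = 0 \<longrightarrow>
            (\<integral>v. Lop kappa kinf h v * h v \<partial>lborel)
              \<le> - (rho kinf TYPE('a) / (kappa * kinf))
                  * (1 - (1 / rho kinf TYPE('a)) * (\<integral>v. (finf kinf v)^3 \<partial>(lborel :: 'a measure)))
                  * (\<integral>v. (h v)\<^sup>2 \<partial>lborel))"
  using assms
  by (intro conjI ballI impI Lop_null_space integral_finf_cube_less_rho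
      Lop_inner_le_nu_weighted Lop_spectral_gap)

end
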